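(* Let $d\ge2$ and $r$ be integers with $d<r<2d$, let $a\in k$, and let $\widetilde X(d,r)\subset\mathbb{A}^3=\mathrm{Spec}\,k[x,y,z]$ be the hypersurface $x^rz+y^d+ax^d=1$ and $\widetilde V(d,r)$ the hypersurface $x^rz+y^d=1$. For $\lambda$ a $d$-th root of unity let $p_\lambda(x)\in k[x]$ be the unique polynomial of degree $\le r-1$ with $p_\lambda(0)=\lambda$ such that $x^r$ divides $1-p_\lambda(x)^d-ax^d$. Then: (1) $p_\lambda(x)=\lambda-\frac{a}{d}\lambda x^d$ for every $d$-th root of unity $\lambda$. (2) Put $\sigma(x,c)=\left(1-\frac{a}{d}x^d\right)c$ (which equals $\frac{1}{1-\lambda}\{p_1(\lambda x)-p_\lambda(\lambda x)\}c$ for every $\lambda\ne1$) and $\tau(x,c)=-\frac{a^2}{d^2}x^{2d-r}+\left(1+\frac{a}{d}x^d\right)c$. Then for every $d$-th root of unity $\lambda$, $\lambda^{1-r}x^r\sigma\!\left(\lambda^{-1}x,\lambda^{r-1}\left(c+\frac{1-\lambda}{x^r}\right)\right)=x^r\sigma(x,c)+p_1(x)-p_\lambda(x)$ and $\lambda^{1-r}x^r\tau\!\left(\lambda^{-1}x,\lambda^{r-1}\left(c+\frac{p_1(x)-p_\lambda(x)}{x^r}\right)\right)=x^r\tau(x,c)+1-\lambda$. (3) There is an isomorphism $\widetilde X(d,r)\times\mathbb{A}^1\cong\widetilde V(d,r)\times\mathbb{A}^1$.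
   Context: Work over an algebraically closed field $k$ of characteristic zero; $x,c$ are independent variables and the identities in (2) are identities of rational functions. *)

theory Defs
  imports "HOL-Computational_Algebra.Polynomial"
begin

definition p_lam :: "'k::field \<Rightarrow> nat \<Rightarrow> nat \<Rightarrow> 'k \<Rightarrow> 'k poly" where
  "p_lam a d r lam = (THE p. degree p \<le> r - 1 \<and> poly p 0 = lam \<and>
      [:0, 1:] ^ r dvd (1 - p ^ d - smult a (monom 1 d)))"

definition sigma_fn :: "'k::field \<Rightarrow> nat \<Rightarrow> 'k \<Rightarrow> 'k \<Rightarrow> 'k" where
  "sigma_fn a d x c = (1 - a / of_nat d * x ^ d) * c"

definition tau_fn :: "'k::field \<Rightarrow> nat \<Rightarrow> nat \<Rightarrow> 'k \<Rightarrow> 'k \<Rightarrow> 'k" where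
  "tau_fn a d r x c = - (a ^ 2 / of_nat d ^ 2) * x ^ (2 * d - r) + (1 + a / of_nat d * x ^ d) * c"

inductive polyfun4 :: "('k::comm_ring_1 \<times> 'k \<times> 'k \<times> 'k \<Rightarrow> 'k) \<Rightarrow> bool" where
  const: "polyfun4 (\<lambda>_. c)"
| proj1: "polyfun4 (\<lambda>(x1, x2, x3, x4). x1)"
| proj2: "polyfun4 (\<lambda>(x1, x2, x3, x4). x2)"
| proj3: "polyfun4 (\<lambda>(x1, x2, x3, x4). x3)"
| proj4: "polyfun4 (\<lambda>(x1, x2, x3, x4). x4)"
| add: "polyfun4 f \<Longrightarrow> polyfun4 g \<Longrightarrow> polyfun4 (\<lambda>p. f p + g p)"
| mult: "polyfun4 f \<Longrightarrow> polyfun4 g \<Longrightarrow> polyfun4 (\<lambda>p. f p * g p)"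

definition polymap4 :: "('k::comm_ring_1 \<times> 'k \<times> 'k \<times> 'k \<Rightarrow> 'k \<times> 'k \<times> 'k \<times> 'k) \<Rightarrow> bool" where
  "polymap4 F \<longleftrightarrow> polyfun4 (\<lambda>p. fst (F p)) \<and> polyfun4 (\<lambda>p. fst (snd (F p)))
     \<and> polyfun4 (\<lambda>p. fst (snd (snd (F p)))) \<and> polyfun4 (\<lambda>p. snd (snd (snd (F p))))"

text \<open>Isomorphism of (reduced) closed subvarieties of A^4, given by their k-points:
  mutually inverse polynomial maps.\<close>
definition iso_affine4 :: "('k::comm_ring_1 \<times> 'k \<times> 'k \<times> 'k) set \<Rightarrow> ('k \<times> 'k \<times> 'k \<times> 'k) set \<Rightarrow> bool" where
  "iso_affine4 S T \<longleftrightarrow> (\<exists>F G. polymap4 F \<and> polymap4 G \<and> F ` S \<subseteq> T \<and> G ` T \<subseteq> S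
      \<and> (\<forall>s\<in>S. G (F s) = s) \<and> (\<forall>t\<in>T. F (G t) = t))"

text \<open>X~(d,r) x A^1 and V~(d,r) x A^1 inside A^4 (last coordinate is the A^1 factor).\<close>
definition Xt_A1 :: "'k::comm_ring_1 \<Rightarrow> nat \<Rightarrow> nat \<Rightarrow> ('k \<times> 'k \<times> 'k \<times> 'k) set" where
  "Xt_A1 a d r = {(x, y, z, w). x ^ r * z + y ^ d + a * x ^ d = 1}"

definition Vt_A1 :: "nat \<Rightarrow> nat \<Rightarrow> ('k::comm_ring_1 \<times> 'k \<times> 'k \<times> 'k) set" where
  "Vt_A1 d r = {(x, y, z, w). x ^ r * z + y ^ d = 1}"

end

theory Submission
  imports Defs
begin

text \<open>Put \<open>u = 1 - (a/d) x^d\<close> and \<open>v = 1 + (a/d) x^d\<close>. The binomial expansion gives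
  \<open>u^d \<equiv> 1 - a x^d\<close> modulo \<open>x^(2d)\<close>, hence modulo \<open>x^r\<close>, so \<open>\<lambda> u\<close> is the truncated root
  \<open>p\<^sub>\<lambda>\<close>; it is unique because \<open>p^d - q^d = (p - q) R\<close> with \<open>R(0) \<noteq> 0\<close>. The identities for
  \<open>\<sigma>\<close> and \<open>\<tau>\<close> are direct computations using \<open>(\<lambda>\<^sup>-\<^sup>1 x)^d = x^d\<close>.
  For the isomorphism, \<open>u v + (a/d)\<^sup>2 x^(2d) = 1\<close>, so \<open>(y, w) \<mapsto> (v y + (a/d)\<^sup>2 x^(2d) w, u w - y)\<close>
  is invertible over \<open>k[x]\<close>. It turns \<open>y^d + a x^d\<close> into \<open>y^d\<close> modulo \<open>x^(2d)\<close>, so the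
  \<open>z\<close>-coordinate can be corrected polynomially (this uses \<open>r \<le> 2d\<close>). Off \<open>x = 0\<close> the
  \<open>z\<close>-coordinate is determined by the others, and on \<open>x = 0\<close> (where \<open>r < 2d\<close> matters) both
  maps fix it, so the two maps are mutually inverse.\<close>

section \<open>The truncated roots \<open>p\<^sub>\<lambda>\<close>\<close>

lemma square_dvd_one_plus_power_diff:
  fixes s :: "'a::comm_ring_1"
  shows "s^2 dvd (1 + s)^n - 1 - of_nat n * s"
proof (induction n)
  case 0 show ?case by simp
next
  case (Suc n)
  have "(1 + s)^Suc n - 1 - of_nat (Suc n) * s
      = (1 + s) * ((1 + s)^n - 1 - of_nat n * s) + s^2 * of_nat n"
    by (simp add: algebra_simps power2_eq_square)
  then show ?case using Suc by (simp add: dvd_add dvd_mult)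
qed

text \<open>The truncation of the binomial series of \<open>(1 - a x^d)\<^sup>1\<^sup>/\<^sup>d\<close> after its linear term.\<close>
definition root_trunc :: "'k::field \<Rightarrow> nat \<Rightarrow> 'k poly" where
  "root_trunc a d = 1 - smult (a / of_nat d) (monom 1 d)"

definition root_trunc_defect :: "'k::field \<Rightarrow> nat \<Rightarrow> 'k poly" where
  "root_trunc_defect a d = (1 - smult a (monom 1 d) - root_trunc a d ^ d) div monom 1 (2 * d)"

lemma poly_root_trunc [simp]: "poly (root_trunc a d) x = 1 - a / of_nat d * x ^ d"
  by (simp add: root_trunc_def poly_monom)

lemma degree_root_trunc_le: "degree (root_trunc a d) \<le> d"
  unfolding root_trunc_def
  by (rule degree_diff_le) (auto intro: order.trans[OF degree_smult_le] degree_monom_le)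

lemma monom_dvd_root_trunc_power_diff:
  fixes a :: "'k::field_char_0"
  assumes "0 < d"
  shows "monom 1 (2 * d) dvd 1 - smult a (monom 1 d) - root_trunc a d ^ d"
proof -
  define s :: "'k poly" where "s = - smult (a / of_nat d) (monom 1 d)"
  have "of_nat d * s = - smult a (monom 1 d)"
    using assms by (simp add: s_def of_nat_poly)
  then have "1 - smult a (monom 1 d) - root_trunc a d ^ d = - ((1 + s)^d - 1 - of_nat d * s)"
    by (simp add: root_trunc_def s_def)
  moreover have "s^2 = smult ((a / of_nat d)^2) (monom 1 (2 * d))"
    by (simp add: s_def power2_eq_square mult_monom mult_2)
  ultimately show ?thesis
    using square_dvd_one_plus_power_diff[of s d]
    by (metis dvd_minus_iff dvd_smult_cancel dvd_trans dvd_refl smult_dvd_cancel)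
qed

lemma root_trunc_power:
  fixes a :: "'k::field_char_0"
  assumes "0 < d"
  shows "root_trunc a d ^ d = 1 - smult a (monom 1 d) - monom 1 (2 * d) * root_trunc_defect a d"
  using dvd_mult_div_cancel[OF monom_dvd_root_trunc_power_diff[OF assms, of a]]
  by (simp add: root_trunc_defect_def algebra_simps)

lemma poly_root_trunc_power:
  fixes a :: "'k::field_char_0"
  assumes "0 < d"
  shows "poly (root_trunc a d) x ^ d = 1 - a * x ^ d - x ^ (2 * d) * poly (root_trunc_defect a d) x"
  using arg_cong[OF root_trunc_power[OF assms, of a], of "\<lambda>p. poly p x"]
  by (simp add: poly_monom del: poly_root_trunc)

lemma poly_root_trunc_mult_neg:
  "poly (root_trunc a d) x * poly (root_trunc (- a) d) x + (a / of_nat d)^2 * x ^ (2 * d) = 1"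
proof -
  have "x ^ (2 * d) = x ^ d * x ^ d"
    by (simp add: mult_2 power_add)
  then show ?thesis
    by (simp add: algebra_simps power2_eq_square power_mult_distrib)
qed

lemma poly_root_trunc_root_of_unity:
  assumes "lam ^ d = 1"
  shows "poly (root_trunc a d) (lam * x) = poly (root_trunc a d) x"
  by (simp add: power_mult_distrib assms)

lemma eq_if_power_congruent_mod_monom:
  fixes p q :: "'k::field_char_0 poly"
  assumes dvd: "[:0, 1:] ^ r dvd p ^ d - q ^ d" and "0 < d"
    and deg: "degree p < r" "degree q < r"
    and const: "poly p 0 = poly q 0" "poly p 0 \<noteq> 0"
  shows "p = q"
proof (rule ccontr)
  assume "p \<noteq> q"
  define R where "R = (\<Sum>i<d. q ^ (d - Suc i) * p ^ i)"
  have "p ^ d - q ^ d = (p - q) * R"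
    unfolding R_def by (rule power_diff_sumr2)
  have "poly R 0 = (\<Sum>i<d. poly p 0 ^ (d - Suc i) * poly p 0 ^ i)"
    by (simp add: R_def poly_sum const(1)[symmetric])
  also have "\<dots> = (\<Sum>i<d. poly p 0 ^ (d - 1))"
    by (rule sum.cong) (auto simp: power_add[symmetric])
  also have "\<dots> = of_nat d * poly p 0 ^ (d - 1)"
    by simp
  finally have "poly R 0 \<noteq> 0"
    using \<open>0 < d\<close> const(2) by simp
  then have "order 0 R = 0" and "R \<noteq> 0"
    using order_root by auto
  with \<open>p \<noteq> q\<close> have "order 0 ((p - q) * R) = order 0 (p - q)"
    using order_mult[of "p - q" R 0] by simp
  moreover have "r \<le> order 0 ((p - q) * R)"
    using dvd \<open>p \<noteq> q\<close> \<open>R \<noteq> 0\<close> \<open>p ^ d - q ^ d = (p - q) * R\<close> order_divides[of 0 r "(p - q) * R"]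
    by simp
  ultimately have "[:0, 1:] ^ r dvd p - q"
    using order_divides[of 0 r "p - q"] by simp
  then have "r \<le> degree (p - q)"
    using \<open>p \<noteq> q\<close> dvd_imp_degree_le[of "[:0, 1:] ^ r" "p - q"] degree_linear_power[of "0::'k" r]
    by simp
  moreover have "degree (p - q) < r"
    using deg degree_diff_le_max[of p q] by simp
  ultimately show False
    by simp
qed

lemma p_lam_eq_smult_root_trunc:
  fixes a lam :: "'k::field_char_0"
  assumes "0 < d" "d < r" "r \<le> 2 * d" "lam ^ d = 1"
  shows "p_lam a d r lam = smult lam (root_trunc a d)"
  unfolding p_lam_def
proof (rule the_equality)
  let ?p = "smult lam (root_trunc a d)"
  have "[:0, 1:] ^ r dvd (monom 1 (2 * d) :: 'k poly)"
    using \<open>r \<le> 2 * d\<close> by (simp add: monom_altdef le_imp_power_dvd)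
  moreover have "1 - ?p ^ d - smult a (monom 1 d) = monom 1 (2 * d) * root_trunc_defect a d"
    using \<open>lam ^ d = 1\<close> root_trunc_power[OF \<open>0 < d\<close>, of a] by (simp add: smult_power)
  ultimately have "[:0, 1:] ^ r dvd 1 - ?p ^ d - smult a (monom 1 d)"
    by (metis dvd_mult2)
  moreover have "degree ?p \<le> r - 1"
    using degree_smult_le[of lam "root_trunc a d"] degree_root_trunc_le[of a d] \<open>d < r\<close> by linarith
  ultimately show "degree ?p \<le> r - 1 \<and> poly ?p 0 = lam \<and> [:0, 1:] ^ r dvd 1 - ?p ^ d - smult a (monom 1 d)"
    using \<open>0 < d\<close> by simp
  fix p
  assume p: "degree p \<le> r - 1 \<and> poly p 0 = lam \<and> [:0, 1:] ^ r dvd 1 - p ^ d - smult a (monom 1 d)"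
  have "[:0, 1:] ^ r dvd (1 - ?p ^ d - smult a (monom 1 d)) - (1 - p ^ d - smult a (monom 1 d))"
    using p \<open>[:0, 1:] ^ r dvd 1 - ?p ^ d - smult a (monom 1 d)\<close> dvd_diff by blast
  then have "[:0, 1:] ^ r dvd p ^ d - ?p ^ d"
    by simp
  moreover have "lam \<noteq> 0"
    using \<open>lam ^ d = 1\<close> \<open>0 < d\<close> by (metis power_0_left zero_neq_one not_gr0)
  ultimately show "p = ?p"
    using p \<open>degree ?p \<le> r - 1\<close> \<open>0 < d\<close> \<open>d < r\<close>
    by (intro eq_if_power_congruent_mod_monom[where r = r and d = d]) auto
qed

section \<open>The functions \<open>\<sigma>\<close> and \<open>\<tau>\<close>\<close>

lemma sigma_fn_eq_root_difference:
  fixes lam :: "'k::field"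
  assumes "lam ^ d = 1" "lam \<noteq> 1"
  shows "sigma_fn a d x c
    = 1 / (1 - lam) * (poly (root_trunc a d) (lam * x) - lam * poly (root_trunc a d) (lam * x)) * c"
proof -
  have "poly (root_trunc a d) (lam * x) - lam * poly (root_trunc a d) (lam * x)
      = (1 - lam) * poly (root_trunc a d) x"
    unfolding poly_root_trunc_root_of_unity[OF assms(1)] by (simp add: algebra_simps diff_divide_distrib)
  then show ?thesis
    using assms(2) by (simp add: sigma_fn_def)
qed

lemma sigma_fn_cocycle:
  fixes lam :: "'k::field"
  assumes "lam ^ d = 1" "0 < d" "x \<noteq> 0"
  shows "inverse (lam ^ (r - 1)) * x ^ r *
      sigma_fn a d (inverse lam * x) (lam ^ (r - 1) * (c + (1 - lam) / x ^ r))
    = x ^ r * sigma_fn a d x c + poly (root_trunc a d) x - lam * poly (root_trunc a d) x"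
proof -
  have "lam \<noteq> 0"
    using assms(1,2) by (metis power_0_left zero_neq_one not_gr0)
  moreover have "(inverse lam * x) ^ d = x ^ d"
    by (simp add: power_mult_distrib power_inverse assms(1))
  ultimately show ?thesis
    using assms(3) by (simp add: sigma_fn_def field_simps)
qed

lemma tau_fn_cocycle:
  fixes lam :: "'k::field_char_0"
  assumes "lam ^ d = 1" "d < r" "r < 2 * d" "x \<noteq> 0"
  shows "inverse (lam ^ (r - 1)) * x ^ r *
      tau_fn a d r (inverse lam * x)
        (lam ^ (r - 1) * (c + (poly (root_trunc a d) x - lam * poly (root_trunc a d) x) / x ^ r))
    = x ^ r * tau_fn a d r x c + 1 - lam"
proof -
  define u where "u = a / of_nat d"
  define k where "k = 2 * d - r"
  define L where "L = lam ^ (r - 1)"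
  have "lam \<noteq> 0"
    using assms(1-3) by (metis power_0_left zero_neq_one less_nat_zero_code mult_0_right)
  have tau: "tau_fn a d r y C = - (u ^ 2) * y ^ k + (1 + u * y ^ d) * C" for y C
    by (simp add: tau_fn_def u_def k_def power_divide)
  have "L * lam ^ k * lam = lam ^ (2 * d)"
    using assms(2,3) by (simp add: L_def k_def flip: power_add power_Suc2)
  also have "\<dots> = 1"
    by (simp add: power_mult mult.commute[of 2] assms(1))
  finally have "inverse (L * lam ^ k) = lam"
    by (rule inverse_unique)
  then have inv: "inverse L * inverse lam ^ k = lam"
    by (simp add: power_inverse inverse_mult_distrib)
  have D: "poly (root_trunc a d) x - lam * poly (root_trunc a d) x = (1 - lam) * (1 - u * x ^ d)"
    by (simp add: u_def algebra_simps diff_divide_distrib)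
  have "inverse lam ^ d = 1"
    by (simp add: power_inverse assms(1))
  then have "inverse L * x ^ r * tau_fn a d r (inverse lam * x) (L * K)
      = - (u ^ 2) * (inverse L * inverse lam ^ k) * (x ^ r * x ^ k) + (1 + u * x ^ d) * (inverse L * L) * (x ^ r * K)"
    for K by (simp add: tau power_mult_distrib algebra_simps)
  moreover have "x ^ r * x ^ k = x ^ d * x ^ d"
    using assms(3) by (simp add: k_def mult_2 flip: power_add)
  moreover have "x ^ r * (c + D / x ^ r) = x ^ r * c + D" for D
    using assms(4) by (simp add: field_simps)
  moreover have "inverse L * L = 1"
    using \<open>lam \<noteq> 0\<close> by (simp add: L_def)
  ultimately have "inverse L * x ^ r * tau_fn a d r (inverse lam * x) (L * (c + (1 - lam) * (1 - u * x ^ d) / x ^ r))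
      = - (u ^ 2) * lam * (x ^ d * x ^ d) + (1 + u * x ^ d) * (x ^ r * c + (1 - lam) * (1 - u * x ^ d))"
    by (simp only: inv mult_1_right)
  also have "\<dots> = x ^ r * tau_fn a d r x c + 1 - lam"
  proof -
    have "x ^ r * tau_fn a d r x c = - (u ^ 2) * (x ^ r * x ^ k) + (1 + u * x ^ d) * (x ^ r * c)"
      unfolding tau by (simp add: algebra_simps)
    then show ?thesis
      unfolding \<open>x ^ r * x ^ k = x ^ d * x ^ d\<close> by (simp add: algebra_simps power2_eq_square)
  qed
  finally show ?thesis
    unfolding D L_def .
qed

section \<open>Polynomial maps of affine 4-space\<close>

lemma polyfun4_coordinates:
  "polyfun4 (\<lambda>p :: 'k::comm_ring_1 \<times> 'k \<times> 'k \<times> 'k. fst p)" "polyfun4 (\<lambda>p :: 'k \<times> 'k \<times> 'k \<times> 'k. fst (snd p))"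
  "polyfun4 (\<lambda>p :: 'k \<times> 'k \<times> 'k \<times> 'k. fst (snd (snd p)))" "polyfun4 (\<lambda>p :: 'k \<times> 'k \<times> 'k \<times> 'k. snd (snd (snd p)))"
  using polyfun4.proj1[where 'k = 'k] polyfun4.proj2[where 'k = 'k]
    polyfun4.proj3[where 'k = 'k] polyfun4.proj4[where 'k = 'k]
  by (simp_all add: case_prod_beta')

lemma polyfun4_uminus: "polyfun4 f \<Longrightarrow> polyfun4 (\<lambda>p. - f p)"
  using polyfun4.mult[OF polyfun4.const[of "- 1"], of f] by simp

lemma polyfun4_diff: "polyfun4 f \<Longrightarrow> polyfun4 g \<Longrightarrow> polyfun4 (\<lambda>p. f p - g p)"
  using polyfun4.add[OF _ polyfun4_uminus, of f g] by simp

lemma polyfun4_power: "polyfun4 f \<Longrightarrow> polyfun4 (\<lambda>p. f p ^ n)"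
  by (induction n) (auto intro: polyfun4.intros)

lemma polyfun4_sum:
  "(\<And>i. i \<in> I \<Longrightarrow> polyfun4 (f i)) \<Longrightarrow> polyfun4 (\<lambda>p. \<Sum>i\<in>I. f i p)"
  by (induction I rule: infinite_finite_induct) (auto intro: polyfun4.intros)

lemma polyfun4_poly: "polyfun4 f \<Longrightarrow> polyfun4 (\<lambda>p. poly q (f p))"
  by (induction q) (auto intro: polyfun4.intros)

definition power_add_quot :: "'a::comm_ring_1 \<Rightarrow> 'a \<Rightarrow> nat \<Rightarrow> 'a" where
  "power_add_quot s t n = (\<Sum>i<n. s ^ (n - Suc i) * (s + t) ^ i)"

lemma power_add_eq_power_add_quot: "(s + t) ^ n = s ^ n + t * power_add_quot s t n"
  using power_diff_sumr2[of "s + t" n s] by (simp add: power_add_quot_def algebra_simps)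

lemma polyfun4_power_add_quot:
  "polyfun4 f \<Longrightarrow> polyfun4 g \<Longrightarrow> polyfun4 (\<lambda>p. power_add_quot (f p) (g p) n)"
  unfolding power_add_quot_def by (intro polyfun4_sum polyfun4.mult polyfun4_power polyfun4.add)

section \<open>The isomorphism\<close>

definition Xt_to_Vt :: "'k::field \<Rightarrow> nat \<Rightarrow> nat \<Rightarrow> 'k \<times> 'k \<times> 'k \<times> 'k \<Rightarrow> 'k \<times> 'k \<times> 'k \<times> 'k" where
  "Xt_to_Vt a d r = (\<lambda>(x, y, z, w).
     let u = poly (root_trunc a d) x; v = poly (root_trunc (- a) d) x;
       e = (a / of_nat d) ^ 2; m = x ^ (2 * d - r); t = e * x ^ (2 * d) * w
     in (x, v * y + t,
       v ^ d * z + m * (a ^ 2 + (1 - a * x ^ d) * poly (root_trunc_defect (- a) d) x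
         - e * w * power_add_quot (v * y) t d),
       u * w - y))"

definition Vt_to_Xt :: "'k::field \<Rightarrow> nat \<Rightarrow> nat \<Rightarrow> 'k \<times> 'k \<times> 'k \<times> 'k \<Rightarrow> 'k \<times> 'k \<times> 'k \<times> 'k" where
  "Vt_to_Xt a d r = (\<lambda>(x, y, z, w).
     let u = poly (root_trunc a d) x; v = poly (root_trunc (- a) d) x;
       e = (a / of_nat d) ^ 2; m = x ^ (2 * d - r); t = e * x ^ (2 * d) * w
     in (x, u * y - t,
       u ^ d * z + m * (poly (root_trunc_defect a d) x + e * w * power_add_quot (u * y) (- t) d),
       y + v * w))"

lemma polymap4_Xt_to_Vt: "polymap4 (Xt_to_Vt a d r)"
  using polyfun4_coordinates
  unfolding polymap4_def Xt_to_Vt_def Let_def case_prod_beta'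
  by (simp del: poly_root_trunc)
    (intro conjI polyfun4.intros polyfun4_diff polyfun4_power polyfun4_poly polyfun4_power_add_quot; assumption)

lemma polymap4_Vt_to_Xt: "polymap4 (Vt_to_Xt a d r)"
  using polyfun4_coordinates
  unfolding polymap4_def Vt_to_Xt_def Let_def case_prod_beta'
  by (simp del: poly_root_trunc)
    (intro conjI polyfun4.intros polyfun4_uminus polyfun4_diff polyfun4_power polyfun4_poly polyfun4_power_add_quot; assumption)

lemma Xt_to_Vt_mem:
  fixes a :: "'k::field_char_0"
  assumes "0 < d" "r \<le> 2 * d" and p: "p \<in> Xt_A1 a d r"
  shows "Xt_to_Vt a d r p \<in> Vt_A1 d r"
proof -
  obtain x y z w where p_eq: "p = (x, y, z, w)"
    by (cases p)
  define v where "v = poly (root_trunc (- a) d) x"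
  define g where "g = poly (root_trunc_defect (- a) d) x"
  define e where "e = (a / of_nat d) ^ 2"
  define m where "m = x ^ (2 * d - r)"
  define B where "B = power_add_quot (v * y) (e * x ^ (2 * d) * w) d"
  have X: "x ^ r * z + y ^ d = 1 - a * x ^ d"
    using p by (simp add: p_eq Xt_A1_def algebra_simps)
  have v: "v ^ d = 1 + a * x ^ d - x ^ r * m * g"
    using poly_root_trunc_power[OF \<open>0 < d\<close>, of "- a" x] \<open>r \<le> 2 * d\<close>
    by (simp add: v_def g_def m_def flip: power_add del: poly_root_trunc)
  have xm: "x ^ (2 * d) = x ^ r * m" "x ^ d * x ^ d = x ^ r * m" "x ^ d * x ^ d = m * x ^ r"
    using \<open>r \<le> 2 * d\<close> by (simp_all add: m_def mult_2 flip: power_add)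
  have "Xt_to_Vt a d r p = (x, v * y + e * x ^ r * m * w,
      v ^ d * z + m * (a ^ 2 + (1 - a * x ^ d) * g - e * w * B), poly (root_trunc a d) x * w - y)"
    by (simp add: p_eq Xt_to_Vt_def Let_def v_def g_def e_def m_def B_def xm(1) del: poly_root_trunc)
  moreover have "x ^ r * (v ^ d * z + m * (a ^ 2 + (1 - a * x ^ d) * g - e * w * B))
      + (v * y + e * x ^ r * m * w) ^ d = 1"
  proof -
    have "(v * y + e * x ^ r * m * w) ^ d = v ^ d * y ^ d + e * x ^ r * m * w * B"
      using power_add_eq_power_add_quot[of "v * y" "e * x ^ (2 * d) * w" d]
      by (simp add: B_def xm(1) power_mult_distrib mult.assoc)
    then have "x ^ r * (v ^ d * z + m * (a ^ 2 + (1 - a * x ^ d) * g - e * w * B))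
        + (v * y + e * x ^ r * m * w) ^ d
      = v ^ d * (x ^ r * z + y ^ d) + x ^ r * m * (a ^ 2 + (1 - a * x ^ d) * g)"
      by (simp add: algebra_simps)
    also have "\<dots> = 1"
      unfolding X v by (simp add: algebra_simps power2_eq_square xm(2,3)[symmetric])
    finally show ?thesis .
  qed
  ultimately show ?thesis
    by (simp add: Vt_A1_def)
qed

lemma Vt_to_Xt_mem:
  fixes a :: "'k::field_char_0"
  assumes "0 < d" "r \<le> 2 * d" and p: "p \<in> Vt_A1 d r"
  shows "Vt_to_Xt a d r p \<in> Xt_A1 a d r"
proof -
  obtain x y z w where p_eq: "p = (x, y, z, w)"
    by (cases p)
  define u where "u = poly (root_trunc a d) x"
  define g where "g = poly (root_trunc_defect a d) x"
  define e where "e = (a / of_nat d) ^ 2"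
  define m where "m = x ^ (2 * d - r)"
  define B where "B = power_add_quot (u * y) (- (e * x ^ (2 * d) * w)) d"
  have V: "x ^ r * z + y ^ d = 1"
    using p by (simp add: p_eq Vt_A1_def)
  have u: "u ^ d = 1 - a * x ^ d - x ^ r * m * g"
    using poly_root_trunc_power[OF \<open>0 < d\<close>, of a x] \<open>r \<le> 2 * d\<close>
    by (simp add: u_def g_def m_def flip: power_add del: poly_root_trunc)
  have xm: "x ^ (2 * d) = x ^ r * m"
    using \<open>r \<le> 2 * d\<close> by (simp add: m_def flip: power_add)
  have "Vt_to_Xt a d r p = (x, u * y - e * x ^ r * m * w,
      u ^ d * z + m * (g + e * w * B), y + poly (root_trunc (- a) d) x * w)"
    by (simp add: p_eq Vt_to_Xt_def Let_def u_def g_def e_def m_def B_def xm del: poly_root_trunc)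
  moreover have "x ^ r * (u ^ d * z + m * (g + e * w * B)) + (u * y - e * x ^ r * m * w) ^ d
      + a * x ^ d = 1"
  proof -
    have "(u * y - e * x ^ r * m * w) ^ d = u ^ d * y ^ d - e * x ^ r * m * w * B"
      using power_add_eq_power_add_quot[of "u * y" "- (e * x ^ (2 * d) * w)" d]
      by (simp add: B_def xm power_mult_distrib mult.assoc)
    then have "x ^ r * (u ^ d * z + m * (g + e * w * B)) + (u * y - e * x ^ r * m * w) ^ d
        + a * x ^ d = u ^ d * (x ^ r * z + y ^ d) + x ^ r * m * g + a * x ^ d"
      by (simp add: algebra_simps)
    also have "\<dots> = 1"
      unfolding V u by (simp add: algebra_simps)
    finally show ?thesis .
  qed
  ultimately show ?thesis
    by (simp add: Xt_A1_def)
qed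

lemma Xt_to_Vt_zero:
  assumes "0 < d" "r < 2 * d"
  shows "Xt_to_Vt a d r (0, y, z, w) = (0, y, z, w - y)"
  using assms by (simp add: Xt_to_Vt_def Let_def zero_power)

lemma Vt_to_Xt_zero:
  assumes "0 < d" "r < 2 * d"
  shows "Vt_to_Xt a d r (0, y, z, w) = (0, y, z, y + w)"
  using assms by (simp add: Vt_to_Xt_def Let_def zero_power)

lemma Vt_to_Xt_Xt_to_Vt:
  fixes a :: "'k::field_char_0"
  assumes "0 < d" "r < 2 * d" and p: "p \<in> Xt_A1 a d r"
  shows "Vt_to_Xt a d r (Xt_to_Vt a d r p) = p"
proof -
  obtain x y z w where p_eq: "p = (x, y, z, w)"
    by (cases p)
  show ?thesis
  proof (cases "x = 0")
    case True
    then show ?thesis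
      using assms(1,2) by (simp add: p_eq Xt_to_Vt_zero Vt_to_Xt_zero)
  next
    case False
    define u where "u = poly (root_trunc a d) x"
    define v where "v = poly (root_trunc (- a) d) x"
    define t where "t = (a / of_nat d) ^ 2 * x ^ (2 * d)"
    have uv: "u * v + t = 1"
      using poly_root_trunc_mult_neg[of a d x] by (simp add: u_def v_def t_def del: poly_root_trunc)
    obtain z1 where F: "Xt_to_Vt a d r p = (x, v * y + t * w, z1, u * w - y)"
      by (simp add: p_eq Xt_to_Vt_def Let_def u_def v_def t_def mult.assoc del: poly_root_trunc)
    obtain z2 where "Vt_to_Xt a d r (Xt_to_Vt a d r p)
        = (x, u * (v * y + t * w) - t * (u * w - y), z2, (v * y + t * w) + v * (u * w - y))"
      by (simp add: F Vt_to_Xt_def Let_def u_def v_def t_def mult.assoc del: poly_root_trunc)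
    also have "\<dots> = (x, (u * v + t) * y, z2, (u * v + t) * w)"
      by (simp add: algebra_simps)
    finally have GF: "Vt_to_Xt a d r (Xt_to_Vt a d r p) = (x, y, z2, w)"
      by (simp add: uv)
    have "(x, y, z2, w) \<in> Xt_A1 a d r"
      unfolding GF[symmetric] using assms by (intro Vt_to_Xt_mem Xt_to_Vt_mem) simp_all
    with p have "x ^ r * z2 + y ^ d + a * x ^ d = x ^ r * z + y ^ d + a * x ^ d"
      by (simp add: p_eq Xt_A1_def del: add_right_cancel)
    with False have "z2 = z"
      by simp
    with GF show ?thesis
      by (simp add: p_eq)
  qed
qed

lemma Xt_to_Vt_Vt_to_Xt:
  fixes a :: "'k::field_char_0"
  assumes "0 < d" "r < 2 * d" and p: "p \<in> Vt_A1 d r"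
  shows "Xt_to_Vt a d r (Vt_to_Xt a d r p) = p"
proof -
  obtain x y z w where p_eq: "p = (x, y, z, w)"
    by (cases p)
  show ?thesis
  proof (cases "x = 0")
    case True
    then show ?thesis
      using assms(1,2) by (simp add: p_eq Xt_to_Vt_zero Vt_to_Xt_zero)
  next
    case False
    define u where "u = poly (root_trunc a d) x"
    define v where "v = poly (root_trunc (- a) d) x"
    define t where "t = (a / of_nat d) ^ 2 * x ^ (2 * d)"
    have uv: "u * v + t = 1"
      using poly_root_trunc_mult_neg[of a d x] by (simp add: u_def v_def t_def del: poly_root_trunc)
    obtain z1 where G: "Vt_to_Xt a d r p = (x, u * y - t * w, z1, y + v * w)"
      by (simp add: p_eq Vt_to_Xt_def Let_def u_def v_def t_def mult.assoc del: poly_root_trunc)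
    obtain z2 where "Xt_to_Vt a d r (Vt_to_Xt a d r p)
        = (x, v * (u * y - t * w) + t * (y + v * w), z2, u * (y + v * w) - (u * y - t * w))"
      by (simp add: G Xt_to_Vt_def Let_def u_def v_def t_def mult.assoc del: poly_root_trunc)
    also have "\<dots> = (x, (u * v + t) * y, z2, (u * v + t) * w)"
      by (simp add: algebra_simps)
    finally have FG: "Xt_to_Vt a d r (Vt_to_Xt a d r p) = (x, y, z2, w)"
      by (simp add: uv)
    have "(x, y, z2, w) \<in> Vt_A1 d r"
      unfolding FG[symmetric] using assms by (intro Vt_to_Xt_mem Xt_to_Vt_mem) simp_all
    with p have "x ^ r * z2 + y ^ d = x ^ r * z + y ^ d"
      by (simp add: p_eq Vt_A1_def del: add_right_cancel)
    with False have "z2 = z"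
      by simp
    with FG show ?thesis
      by (simp add: p_eq)
  qed
qed

lemma iso_affine4_Xt_A1_Vt_A1:
  fixes a :: "'k::field_char_0"
  assumes "0 < d" "r < 2 * d"
  shows "iso_affine4 (Xt_A1 a d r) (Vt_A1 d r :: ('k \<times> 'k \<times> 'k \<times> 'k) set)"
  unfolding iso_affine4_def using assms
  by (intro exI[of _ "Xt_to_Vt a d r"] exI[of _ "Vt_to_Xt a d r"])
    (auto simp: polymap4_Xt_to_Vt polymap4_Vt_to_Xt Xt_to_Vt_mem Vt_to_Xt_mem
      Vt_to_Xt_Xt_to_Vt Xt_to_Vt_Vt_to_Xt)

theorem proposition1p4p27:
  fixes a :: "'k :: {alg_closed_field, field_char_0}" and d r :: nat
  assumes "d \<ge> 2" and "d < r" and "r < 2 * d"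
  shows "(\<forall>lam. lam ^ d = 1 \<longrightarrow>
            p_lam a d r lam = [:lam:] - smult (a / of_nat d * lam) (monom 1 d))
    \<and> (\<forall>lam x c. lam ^ d = 1 \<and> lam \<noteq> 1 \<longrightarrow>
            sigma_fn a d x c = 1 / (1 - lam) *
              (poly (p_lam a d r 1) (lam * x) - poly (p_lam a d r lam) (lam * x)) * c)
    \<and> (\<forall>lam x c. lam ^ d = 1 \<and> x \<noteq> 0 \<longrightarrow>
            inverse (lam ^ (r - 1)) * x ^ r *
              sigma_fn a d (inverse lam * x) (lam ^ (r - 1) * (c + (1 - lam) / x ^ r))
            = x ^ r * sigma_fn a d x c + poly (p_lam a d r 1) x - poly (p_lam a d r lam) x)
    \<and> (\<forall>lam x c. lam ^ d = 1 \<and> x \<noteq> 0 \<longrightarrow>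
            inverse (lam ^ (r - 1)) * x ^ r *
              tau_fn a d r (inverse lam * x)
                (lam ^ (r - 1) * (c + (poly (p_lam a d r 1) x - poly (p_lam a d r lam) x) / x ^ r))
            = x ^ r * tau_fn a d r x c + 1 - lam)
    \<and> iso_affine4 (Xt_A1 a d r) (Vt_A1 d r :: ('k \<times> 'k \<times> 'k \<times> 'k) set)"
proof -
  have "0 < d"
    using assms(1) by simp
  have p_lam: "p_lam a d r lam = smult lam (root_trunc a d)" if "lam ^ d = 1" for lam
    using p_lam_eq_smult_root_trunc[OF \<open>0 < d\<close> assms(2) _ that] assms(3) by simp
  have p_lam_1: "p_lam a d r 1 = root_trunc a d"
    using p_lam[of 1] by simp
  show ?thesis
    apply (intro conjI allI impI; (elim conjE)?)
    subgoal for lam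
      by (simp add: p_lam root_trunc_def smult_diff_right mult.commute)
    subgoal
      using sigma_fn_eq_root_difference by (simp only: p_lam p_lam_1 poly_smult)
    subgoal
      using sigma_fn_cocycle[OF _ \<open>0 < d\<close>] by (simp only: p_lam p_lam_1 poly_smult)
    subgoal
      using tau_fn_cocycle[OF _ assms(2,3)] by (simp only: p_lam p_lam_1 poly_smult)
    using iso_affine4_Xt_A1_Vt_A1[OF \<open>0 < d\<close> assms(3)] .
qed

end
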